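(* Let $x\in\mathbf{S}$, let $v\in V$ with $\mathsf{supp}(v)\ne\emptyset$, and let $e=\{v,w\}\in\mathsf{T}(v)$. (E1) If $e\in E_1$, then $x(E(w))=1$ and $\mathsf{B}(w)=\{e\}$. (E2) If $e\in E_2$, then $x(E(w))=1$, $e\in\mathsf{B}(w)$, and $x(E[\sim_v e])\ge x(E[\sim_w e])$.
   Context: Setting: $G=(V,E)$ is a finite simple bipartite graph with $V=V_1\sqcup V_2$, every edge joining a vertex of $V_1$ to a vertex of $V_2$; an edge is identified with the set of its two endpoints. $E$ is partitioned into $E_1,E_2$. For $F\subseteq E$ and $v\in V$, $F(v)$ is the set of edges of $F$ incident to $v$. For every $v\in V$ there is a transitive and complete binary relation $\succsim_v$ on $E(v)\cup\{\emptyset\}$ with $e\succsim_v\emptyset$ and $\emptyset\not\succsim_v e$ for all $e\in E(v)$; $\succ_v$ and $\sim_v$ are its strict and indifference parts. For $x\in\mathbb{R}^E$, $x(F)=\sum_{e\in F}x(e)$. $E[\succ_v e]=\{f\in E(v): f\succ_v e\}$, $E[\sim_v e]=\{f\in E(v): f\sim_v e\}$. $\mathbf{S}$ is the set of $x\in\mathbb{R}_+^E$ with (1) $x(E(v))\le1$ for all $v\in V$; (2) $x(e)+\sum_{v\in e}x(E[\succ_v e])\ge1$ for all $e\in E_1$; (3) $x(E[\sim_v e])+\sum_{w\in e}x(E[\succ_w e])\ge1$ for all $e\in E_2$, $v\in e$. For $x\in\mathbf{S}$: $\mathsf{supp}=\{e\in E: x(e)>0\}$; for $v$ with $\mathsf{supp}(v)\neq\emptyset$,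 $\mathsf{T}(v)$ (resp. $\mathsf{B}(v)$) is the set of $e\in\mathsf{supp}(v)$ with $e\succsim_v f$ (resp. $f\succsim_v e$) for all $f\in\mathsf{supp}(v)$. *)

theory Defs
  imports Complex_Main
begin

(* The weak preference of vertex v
   is a relation  pref v  on  (E(v) \<union> {\<emptyset>}), where the empty set \<emptyset> (no edge) is modelled
   by  None  and an edge e by  Some e. *)

type_synonym 'v edge = "'v set"
type_synonym 'v prefs = "'v \<Rightarrow> 'v edge option \<Rightarrow> 'v edge option \<Rightarrow> bool"

definition bipartite_graph :: "'v set \<Rightarrow> 'v set \<Rightarrow> 'v edge set \<Rightarrow> bool" where
  "bipartite_graph V1 V2 E \<longleftrightarrow> finite V1 \<and> finite V2 \<and> V1 \<inter> V2 = {} \<and>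
     (\<forall>e\<in>E. \<exists>a\<in>V1. \<exists>b\<in>V2. e = {a, b})"

definition inc :: "'v edge set \<Rightarrow> 'v \<Rightarrow> 'v edge set" where
  "inc F v = {e \<in> F. v \<in> e}"

definition valid_prefs :: "'v set \<Rightarrow> 'v edge set \<Rightarrow> 'v prefs \<Rightarrow> bool" where
  "valid_prefs V E R \<longleftrightarrow> (\<forall>v\<in>V.
     let D = Some ` inc E v \<union> {None} in
       (\<forall>a\<in>D. \<forall>b\<in>D. \<forall>c\<in>D. R v a b \<longrightarrow> R v b c \<longrightarrow> R v a c) \<and>
       (\<forall>a\<in>D. \<forall>b\<in>D. R v a b \<or> R v b a) \<and>
       (\<forall>e\<in>inc E v. R v (Some e) None \<and> \<not> R v None (Some e)))"

definition spref :: "'v prefs \<Rightarrow> 'v \<Rightarrow> 'v edge \<Rightarrow> 'v edge \<Rightarrow> bool" where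
  "spref R v e f \<longleftrightarrow> R v (Some e) (Some f) \<and> \<not> R v (Some f) (Some e)"

definition ipref :: "'v prefs \<Rightarrow> 'v \<Rightarrow> 'v edge \<Rightarrow> 'v edge \<Rightarrow> bool" where
  "ipref R v e f \<longleftrightarrow> R v (Some e) (Some f) \<and> R v (Some f) (Some e)"

definition better :: "'v edge set \<Rightarrow> 'v prefs \<Rightarrow> 'v \<Rightarrow> 'v edge \<Rightarrow> 'v edge set" where
  "better E R v e = {f \<in> inc E v. spref R v f e}"

definition indiff :: "'v edge set \<Rightarrow> 'v prefs \<Rightarrow> 'v \<Rightarrow> 'v edge \<Rightarrow> 'v edge set" where
  "indiff E R v e = {f \<in> inc E v. ipref R v f e}"

definition xsum :: "('v edge \<Rightarrow> real) \<Rightarrow> 'v edge set \<Rightarrow> real" where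
  "xsum x F = (\<Sum>e\<in>F. x e)"

definition in_S ::
  "'v set \<Rightarrow> 'v edge set \<Rightarrow> 'v edge set \<Rightarrow> 'v edge set \<Rightarrow> 'v prefs \<Rightarrow> ('v edge \<Rightarrow> real) \<Rightarrow> bool" where
  "in_S V E E1 E2 R x \<longleftrightarrow>
     (\<forall>e\<in>E. 0 \<le> x e) \<and>
     (\<forall>v\<in>V. xsum x (inc E v) \<le> 1) \<and>
     (\<forall>e\<in>E1. x e + (\<Sum>v\<in>e. xsum x (better E R v e)) \<ge> 1) \<and>
     (\<forall>e\<in>E2. \<forall>v\<in>e. xsum x (indiff E R v e) + (\<Sum>w\<in>e. xsum x (better E R w e)) \<ge> 1)"

definition supp :: "'v edge set \<Rightarrow> ('v edge \<Rightarrow> real) \<Rightarrow> 'v edge set" where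
  "supp E x = {e \<in> E. x e > 0}"

definition topset :: "'v edge set \<Rightarrow> 'v prefs \<Rightarrow> ('v edge \<Rightarrow> real) \<Rightarrow> 'v \<Rightarrow> 'v edge set" where
  "topset E R x v = {e \<in> inc (supp E x) v. \<forall>f \<in> inc (supp E x) v. R v (Some e) (Some f)}"

definition botset :: "'v edge set \<Rightarrow> 'v prefs \<Rightarrow> ('v edge \<Rightarrow> real) \<Rightarrow> 'v \<Rightarrow> 'v edge set" where
  "botset E R x v = {e \<in> inc (supp E x) v. \<forall>f \<in> inc (supp E x) v. R v (Some f) (Some e)}"

end

theory Submission
  imports Defs
begin

text \<open>Since e is a top support edge at v, every edge strictly better than e at v carries zero
  weight, so the stability constraint of e is met by edges at w alone: by e itself, or by
  edges w weakly prefers to e. As x(E(w)) \<le> 1, these edges exhaust the whole capacity of w.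
  Hence w is saturated and its support consists of edges it weakly prefers to e, which makes
  e a worst support edge at w.\<close>

lemma bipartite_graph_finite_edges:
  assumes "bipartite_graph V1 V2 E"
  shows "finite E"
proof (rule finite_subset)
  show "E \<subseteq> Pow (V1 \<union> V2)"
    using assms unfolding bipartite_graph_def by fastforce
  show "finite (Pow (V1 \<union> V2))"
    using assms unfolding bipartite_graph_def by simp
qed

lemma bipartite_graph_edge:
  assumes "bipartite_graph V1 V2 E" "{v, w} \<in> E"
  shows "v \<noteq> w \<and> w \<in> V1 \<union> V2"
proof -
  obtain a b where ab: "a \<in> V1" "b \<in> V2" "{v, w} = {a, b}"
    using assms unfolding bipartite_graph_def by blast
  moreover have "a \<noteq> b"
    using ab assms(1) unfolding bipartite_graph_def by blast
  ultimately show ?thesis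
    by (metis Un_iff doubleton_eq_iff)
qed

lemma valid_prefs_refl:
  assumes "valid_prefs V E R" "v \<in> V" "e \<in> inc E v"
  shows "R v (Some e) (Some e)"
  using assms unfolding valid_prefs_def Let_def by blast

lemma xsum_union_disjoint:
  assumes "finite A" "finite B" "A \<inter> B = {}"
  shows "xsum x (A \<union> B) = xsum x A + xsum x B"
  using assms unfolding xsum_def by (rule sum.union_disjoint)

lemma xsum_better_topset:
  assumes "\<forall>f\<in>E. 0 \<le> x f" "e \<in> topset E R x v"
  shows "xsum x (better E R v e) = 0"
  unfolding xsum_def
proof (rule sum.neutral, rule ballI)
  fix f assume f: "f \<in> better E R v e"
  then have "f \<notin> inc (supp E x) v"
    using assms(2) unfolding better_def spref_def topset_def by auto
  with f assms(1) show "x f = 0"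
    unfolding better_def inc_def supp_def by force
qed

lemma saturated_if_covered:
  assumes "finite E" "\<forall>f\<in>E. 0 \<le> x f" "xsum x (inc E w) \<le> 1"
    and T: "T \<subseteq> inc E w" "1 \<le> xsum x T"
  shows "xsum x (inc E w) = 1 \<and> xsum x T = 1 \<and> inc (supp E x) w \<subseteq> T"
proof -
  have fin: "finite (inc E w)"
    using assms(1) unfolding inc_def by simp
  have nonneg: "\<forall>f\<in>inc E w. 0 \<le> x f"
    using assms(2) unfolding inc_def by simp
  have split: "xsum x (inc E w) = xsum x T + xsum x (inc E w - T)"
    unfolding xsum_def using sum.subset_diff[OF T(1) fin] by (simp add: add.commute)
  have "xsum x (inc E w - T) \<ge> 0"
    unfolding xsum_def using nonneg by (intro sum_nonneg) auto
  then have rest: "xsum x (inc E w - T) = 0" and sums: "xsum x (inc E w) = 1" "xsum x T = 1"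
    using split assms(3) T(2) by linarith+
  have vanish: "\<forall>f\<in>inc E w - T. x f = 0"
    using rest fin nonneg unfolding xsum_def by (subst (asm) sum_nonneg_eq_0_iff) auto
  have "f \<in> T" if "f \<in> inc (supp E x) w" for f
    using that vanish unfolding inc_def supp_def by (cases "f \<in> T") auto
  then have "inc (supp E x) w \<subseteq> T" by blast
  with sums show ?thesis by simp
qed

lemma botset_eq_singleton_if_strictly_covered:
  assumes "finite E" "\<forall>f\<in>E. 0 \<le> x f" "xsum x (inc E w) \<le> 1"
    and e: "e \<in> inc (supp E x) w" "R w (Some e) (Some e)"
    and covered: "1 \<le> x e + xsum x (better E R w e)"
  shows "xsum x (inc E w) = 1 \<and> botset E R x w = {e}"
proof -
  have "finite (better E R w e)"
    using assms(1) unfolding better_def inc_def by simp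
  moreover have "e \<notin> better E R w e"
    unfolding better_def spref_def by auto
  ultimately have "1 \<le> xsum x (insert e (better E R w e))"
    using covered by (simp add: xsum_def)
  moreover have "insert e (better E R w e) \<subseteq> inc E w"
    using e(1) unfolding better_def inc_def supp_def by auto
  ultimately have "xsum x (inc E w) = 1 \<and> inc (supp E x) w \<subseteq> insert e (better E R w e)"
    using saturated_if_covered[OF assms(1-3)] by blast
  with e show ?thesis
    unfolding botset_def better_def spref_def by auto
qed

lemma in_botset_if_weakly_covered:
  assumes "finite E" "\<forall>f\<in>E. 0 \<le> x f" "xsum x (inc E w) \<le> 1"
    and e: "e \<in> inc (supp E x) w"
    and covered: "1 \<le> xsum x (indiff E R w e) + xsum x (better E R w e)"
  shows "xsum x (inc E w) = 1 \<and> e \<in> botset E R x w \<and>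
    xsum x (indiff E R w e) + xsum x (better E R w e) = 1"
proof -
  let ?T = "better E R w e \<union> indiff E R w e"
  have "finite (better E R w e)" "finite (indiff E R w e)"
    using assms(1) unfolding better_def indiff_def inc_def by simp_all
  moreover have "better E R w e \<inter> indiff E R w e = {}"
    unfolding better_def indiff_def spref_def ipref_def by auto
  ultimately have T_sum: "xsum x ?T = xsum x (indiff E R w e) + xsum x (better E R w e)"
    by (simp add: xsum_union_disjoint)
  have "?T \<subseteq> inc E w"
    unfolding better_def indiff_def by auto
  moreover have "1 \<le> xsum x ?T"
    using covered T_sum by simp
  ultimately have "xsum x (inc E w) = 1 \<and> xsum x ?T = 1 \<and> inc (supp E x) w \<subseteq> ?T"
    by (rule saturated_if_covered[OF assms(1-3)])
  with e T_sum show ?thesis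
    unfolding botset_def better_def indiff_def spref_def ipref_def by auto
qed

theorem lemma4p5:
  fixes V1 V2 :: "'v set" and E E1 E2 :: "'v set set" and R :: "'v prefs"
    and x :: "'v set \<Rightarrow> real" and v w :: 'v
  assumes G: "bipartite_graph V1 V2 E"
    and part: "E1 \<union> E2 = E" "E1 \<inter> E2 = {}"
    and pref: "valid_prefs (V1 \<union> V2) E R"
    and xS: "in_S (V1 \<union> V2) E E1 E2 R x"
    and vV: "v \<in> V1 \<union> V2"
    and suppv: "inc (supp E x) v \<noteq> {}"
    and eT: "{v, w} \<in> topset E R x v"
  shows "({v, w} \<in> E1 \<longrightarrow>
            xsum x (inc E w) = 1 \<and> botset E R x w = {{v, w}})
       \<and> ({v, w} \<in> E2 \<longrightarrow>
            xsum x (inc E w) = 1 \<and> {v, w} \<in> botset E R x w \<and>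
            xsum x (indiff E R v {v, w}) \<ge> xsum x (indiff E R w {v, w}))"
proof -
  let ?e = "{v, w}"
  have nonneg: "\<forall>f\<in>E. 0 \<le> x f" and finE: "finite E"
    using xS bipartite_graph_finite_edges[OF G] unfolding in_S_def by auto
  have e_supp_w: "?e \<in> inc (supp E x) w" and eE: "?e \<in> E"
    using eT unfolding topset_def inc_def supp_def by auto
  have vw: "v \<noteq> w" and wV: "w \<in> V1 \<union> V2"
    using bipartite_graph_edge[OF G eE] by auto
  have cap_w: "xsum x (inc E w) \<le> 1"
    using xS wV unfolding in_S_def by blast
  have better_at_e: "(\<Sum>u\<in>?e. xsum x (better E R u ?e)) = xsum x (better E R w ?e)"
    using vw xsum_better_topset[OF nonneg eT] by simp
  have "xsum x (inc E w) = 1 \<and> botset E R x w = {?e}" if "?e \<in> E1"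
  proof (rule botset_eq_singleton_if_strictly_covered[OF finE nonneg cap_w e_supp_w])
    show "R w (Some ?e) (Some ?e)"
      using valid_prefs_refl[OF pref wV] e_supp_w unfolding inc_def supp_def by auto
    show "1 \<le> x ?e + xsum x (better E R w ?e)"
      using xS that better_at_e unfolding in_S_def by auto
  qed
  moreover have "xsum x (inc E w) = 1 \<and> ?e \<in> botset E R x w \<and>
      xsum x (indiff E R v ?e) \<ge> xsum x (indiff E R w ?e)" if "?e \<in> E2"
  proof -
    have "1 \<le> xsum x (indiff E R u ?e) + xsum x (better E R w ?e)" if "u \<in> ?e" for u
      using xS \<open>?e \<in> E2\<close> that better_at_e unfolding in_S_def by auto
    \<comment> \<open>x(E[\<sim>_v e]) \<ge> 1 - x(E[\<succ>_w e]) = x(E[\<sim>_w e])\<close>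
    then show ?thesis
      using in_botset_if_weakly_covered[OF finE nonneg cap_w e_supp_w] by fastforce
  qed
  ultimately show ?thesis by blast
qed

end
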